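(* Let $0<S<T$, let $\tilde\beta:[0,T]\to\mathbb{R}^d$, $\tilde B:[0,T]\to\mathbb{R}^{d\times d}$, $\tilde\sigma:[0,T]\to\mathbb{R}^{d\times d'}$ be continuous, $\tilde a=\tilde\sigma\tilde\sigma'$, $L_S\in\mathbb{R}^{m_S\times d}$, $L_T\in\mathbb{R}^{m_T\times d}$, let $\Sigma_S,\Sigma_T$ be symmetric positive definite matrices of sizes $m_S$, $m_T$, and $v_S\in\mathbb{R}^{m_S}$, $v_T\in\mathbb{R}^{m_T}$. With $\tilde L$, $\Upsilon$, $\mu$, $x_{\rm obs}$ as in the context, assume that for every $t\in[0,T]$ the matrix $\tilde M(t)=\big(\int_t^T\tilde L(\tau)\tilde a(\tau)\tilde L(\tau)'\,\mathrm d\tau+\Upsilon(t)\big)^{-1}$ exists and that the null space of $\tilde L(t)$ is $\{0\}$. Let $\tilde H(t)=\tilde L(t)'\tilde M(t)\tilde L(t)$, $\tilde H^\dagger(t)=\tilde H(t)^{-1}$, and $$\nu(t)=\tilde H^\dagger(t)\tilde L(t)'\tilde M(t)\big(x_{\rm obs}(t)-\mu(t)\big).$$ Then for $t\in(S,T]$, $$\frac{\mathrm d\nu(t)}{\mathrm dt}=\tilde B(t)\nu(t)+\tilde\beta(t),\qquad \nu(T)=\big(L_T'\Sigma_T^{-1}L_T\big)^{-1}L_T'\Sigma_T^{-1}v_T.$$ On $[0,S]$ the same differential equation holds, and $\nu(S)$ is obtained from the right limit $\nu(S+)$ by $$\nu(S)=\tilde H^\dagger(S)\big(L_S'\Sigma_S^{-1}v_S+\tilde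 H(S+)\nu(S+)\big).$$
   Context: Let $\Phi$ solve $\mathrm d\Phi(t)=\tilde B(t)\Phi(t)\,\mathrm dt$, $\Phi(0)=I$, and $\Phi(t,s)=\Phi(t)\Phi(s)^{-1}$. Define $\tilde L(t)=\begin{bmatrix}L_S\Phi(S,t)\mathbf 1_{[0,S]}(t)\\ L_T\Phi(T,t)\end{bmatrix}$ for $t\in[0,S]$ and $\tilde L(t)=L_T\Phi(T,t)$ for $t\in(S,T]$; $\Upsilon(t)=\operatorname{diag}(\Sigma_S,\Sigma_T)$ for $t\in[0,S]$ and $\Upsilon(t)=\Sigma_T$ for $t\in(S,T]$; $x_{\rm obs}(t)=(v_S',v_T')'$ for $t\in[0,S]$ and $x_{\rm obs}(t)=v_T$ for $t\in(S,T]$; $\mu(t)=\int_t^T\tilde L(\tau)\tilde\beta(\tau)\,\mathrm d\tau$. For $t\in[0,S]$, in the integrals defining $\mu(t)$ and $\tilde M(t)$ the integrand $\tilde L(\tau)$ means the $(m_S+m_T)\times d$ matrix $\begin{bmatrix}L_S\Phi(S,\tau)\mathbf 1_{[0,S]}(\tau)\\ L_T\Phi(T,\tau)\end{bmatrix}$ for all $\tau\in[t,T]$. $f(S+)$ denotes the right limit at $S$. *)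

theory Defs
  imports "HOL-Analysis.Analysis"
begin

definition stack_rows :: "real^'n^'a \<Rightarrow> real^'n^'b \<Rightarrow> real^'n^('a + 'b)" where
  "stack_rows A C = (\<chi> i. case i of Inl k \<Rightarrow> A $ k | Inr k \<Rightarrow> C $ k)"

definition stack_vec :: "real^'a \<Rightarrow> real^'b \<Rightarrow> real^('a + 'b)" where
  "stack_vec v w = (\<chi> i. case i of Inl k \<Rightarrow> v $ k | Inr k \<Rightarrow> w $ k)"

definition block_diag :: "real^'a^'a \<Rightarrow> real^'b^'b \<Rightarrow> real^('a + 'b)^('a + 'b)" where
  "block_diag A C = (\<chi> i j. case (i, j) of
       (Inl k, Inl l) \<Rightarrow> A $ k $ l
     | (Inr k, Inr l) \<Rightarrow> C $ k $ l
     | _ \<Rightarrow> 0)"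

definition trans_mat :: "(real \<Rightarrow> real^'d^'d) \<Rightarrow> real \<Rightarrow> real \<Rightarrow> real^'d^'d" where
  "trans_mat \<Phi> t s = \<Phi> t ** matrix_inv (\<Phi> s)"

definition sym_posdef :: "real^'m^'m \<Rightarrow> bool" where
  "sym_posdef A \<longleftrightarrow> transpose A = A \<and> (\<forall>x. x \<noteq> 0 \<longrightarrow> x \<bullet> (A *v x) > 0)"

definition kf_M :: "(real \<Rightarrow> real^'d^'m) \<Rightarrow> (real \<Rightarrow> real^'d^'d) \<Rightarrow> real^'m^'m \<Rightarrow> real \<Rightarrow> real \<Rightarrow> real^'m^'m" where
  "kf_M Lt a Ups T t =
     matrix_inv (integral {t..T} (\<lambda>\<tau>. Lt \<tau> ** a \<tau> ** transpose (Lt \<tau>)) + Ups)"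

definition kf_H :: "(real \<Rightarrow> real^'d^'m) \<Rightarrow> (real \<Rightarrow> real^'d^'d) \<Rightarrow> real^'m^'m \<Rightarrow> real \<Rightarrow> real \<Rightarrow> real^'d^'d" where
  "kf_H Lt a Ups T t = transpose (Lt t) ** kf_M Lt a Ups T t ** Lt t"

definition kf_mu :: "(real \<Rightarrow> real^'d^'m) \<Rightarrow> (real \<Rightarrow> real^'d) \<Rightarrow> real \<Rightarrow> real \<Rightarrow> real^'m" where
  "kf_mu Lt \<beta> T t = integral {t..T} (\<lambda>\<tau>. Lt \<tau> *v \<beta> \<tau>)"

definition kf_nu :: "(real \<Rightarrow> real^'d^'m) \<Rightarrow> (real \<Rightarrow> real^'d) \<Rightarrow> (real \<Rightarrow> real^'d^'d) \<Rightarrow> real^'m^'m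
      \<Rightarrow> real^'m \<Rightarrow> real \<Rightarrow> real \<Rightarrow> real^'d" where
  "kf_nu Lt \<beta> a Ups xobs T t =
     matrix_inv (kf_H Lt a Ups T t) *v
       (transpose (Lt t) *v (kf_M Lt a Ups T t *v (xobs - kf_mu Lt \<beta> T t)))"


definition diffusion :: "(real \<Rightarrow> real^'e^'d) \<Rightarrow> real \<Rightarrow> real^'d^'d" where
  "diffusion \<sigma> t = \<sigma> t ** transpose (\<sigma> t)"

text \<open>\<open>L~\<close> on [0,S] (stacked, used as integrand for all \<tau>) and on (S,T].\<close>
definition L_stack :: "real^'d^'mS \<Rightarrow> real^'d^'mT \<Rightarrow> (real \<Rightarrow> real^'d^'d) \<Rightarrow> real \<Rightarrow> real
      \<Rightarrow> real \<Rightarrow> real^'d^('mS + 'mT)" where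
  "L_stack L_S L_T \<Phi> S T \<tau> = stack_rows
     (if \<tau> \<in> {0..S} then L_S ** trans_mat \<Phi> S \<tau> else 0)
     (L_T ** trans_mat \<Phi> T \<tau>)"

definition L_single :: "real^'d^'mT \<Rightarrow> (real \<Rightarrow> real^'d^'d) \<Rightarrow> real \<Rightarrow> real \<Rightarrow> real^'d^'mT" where
  "L_single L_T \<Phi> T \<tau> = L_T ** trans_mat \<Phi> T \<tau>"

end

theory Submission
  imports Defs
begin

(* The estimate nu(t) = H(t)^-1 L(t)^T M(t) (x - mu(t)) is a generalised least-squares estimate
   built from quantities that satisfy linear ODEs in t: L' = -L B (because L = C Phi^-1),
   (M^-1)' = -L a L^T and mu' = -L beta.  Differentiating H^-1 and L^T M (x - mu), every term
   involving the diffusion a cancels, and nu' = B nu + beta on each of the pieces [0,S] and (S,T].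
   Invertibility of Phi comes from backward uniqueness for the linear ODE Phi' = B Phi, and that of
   M^-1 and H from positive definiteness of Sigma_S, Sigma_T and injectivity of L.  At t = S the
   stacked matrix M^-1 is block diagonal, diag(Sigma_S, M(S+)^-1), so the normal equations split
   into the new observation L_S^T Sigma_S^-1 v_S and the term H(S+) nu(S+) carried over from the
   right; the right limits are just continuity of the (S,T] quantities at S. *)

section \<open>Matrix algebra\<close>

lemma matrix_add_rdistrib: "(A + B) ** (C::'a::semiring_1^_^_) = A ** C + B ** C"
  by (vector matrix_matrix_mult_def sum.distrib distrib_right)

lemma bounded_bilinear_matrix_mult:
  "bounded_bilinear ((**) :: real^'n^'m \<Rightarrow> real^'p^'n \<Rightarrow> real^'p^'m)"
proof -
  have "bilinear ((**) :: real^'n^'m \<Rightarrow> real^'p^'n \<Rightarrow> real^'p^'m)"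
    unfolding bilinear_def
    by (auto intro!: linearI simp: matrix_add_ldistrib matrix_add_rdistrib matrix_scalar_ac scalar_matrix_assoc)
  then show ?thesis using bilinear_conv_bounded_bilinear by blast
qed

lemma bounded_bilinear_matrix_vector_mult:
  "bounded_bilinear ((*v) :: real^'n^'m \<Rightarrow> real^'n \<Rightarrow> real^'m)"
proof -
  have "bilinear ((*v) :: real^'n^'m \<Rightarrow> real^'n \<Rightarrow> real^'m)"
    unfolding bilinear_def
    by (auto intro!: linearI simp: matrix_vector_right_distrib matrix_vector_mult_add_rdistrib
        matrix_vector_mult_scaleR scaleR_matrix_vector_assoc)
  then show ?thesis using bilinear_conv_bounded_bilinear by blast
qed

lemma bounded_linear_transpose: "bounded_linear (transpose :: real^'n^'m \<Rightarrow> real^'m^'n)"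
proof -
  have "linear (transpose :: real^'n^'m \<Rightarrow> real^'m^'n)"
    by (rule linearI) (auto simp: transpose_def vec_eq_iff)
  then show ?thesis using linear_conv_bounded_linear by blast
qed

lemmas matrix_mult_minus_left = bounded_bilinear.minus_left[OF bounded_bilinear_matrix_mult]
lemmas matrix_mult_minus_right = bounded_bilinear.minus_right[OF bounded_bilinear_matrix_mult]
lemmas matrix_mult_diff_left = bounded_bilinear.diff_left[OF bounded_bilinear_matrix_mult]
lemmas matrix_mult_diff_right = bounded_bilinear.diff_right[OF bounded_bilinear_matrix_mult]
lemmas matrix_vector_mult_minus_left = bounded_bilinear.minus_left[OF bounded_bilinear_matrix_vector_mult]
lemmas matrix_vector_mult_minus_right = bounded_bilinear.minus_right[OF bounded_bilinear_matrix_vector_mult]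

lemma transpose_minus: "transpose (- (A::real^'n^'m)) = - transpose A"
  by (simp add: transpose_def vec_eq_iff)

lemma transpose_zero: "transpose (0::real^'n^'m) = 0"
  by (simp add: transpose_def vec_eq_iff)

lemma inner_matrix_vector_mult: "(x::real^'m) \<bullet> (A *v y) = (transpose A *v x) \<bullet> (y::real^'n)"
  by (simp add: dot_lmul_matrix[symmetric])

lemma matrix_inv_inverse:
  "invertible (A::'a::semiring_1^'n^'m) \<Longrightarrow> A ** matrix_inv A = mat 1 \<and> matrix_inv A ** A = mat 1"
  unfolding invertible_def matrix_inv_def by (rule someI_ex)

lemma matrix_inv_right: "invertible (A::'a::semiring_1^'n^'m) \<Longrightarrow> A ** matrix_inv A = mat 1"
  and matrix_inv_left: "invertible (A::'a::semiring_1^'n^'m) \<Longrightarrow> matrix_inv A ** A = mat 1"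
  using matrix_inv_inverse by blast+

lemma invertible_matrix_vector_eq_0_iff:
  fixes A :: "real^'n^'n"
  assumes "invertible A"
  shows "A *v x = 0 \<longleftrightarrow> x = 0"
proof
  assume "A *v x = 0"
  then have "(matrix_inv A ** A) *v x = 0" by (simp add: matrix_vector_mul_assoc[symmetric])
  then show "x = 0" using matrix_inv_left[OF assms] by simp
qed simp

lemma matrix_inv_unique:
  fixes X Y :: "real^'n^'n"
  assumes "invertible X" "X ** Y = mat 1"
  shows "matrix_inv X = Y"
proof -
  have "matrix_inv X = matrix_inv X ** (X ** Y)" using assms by simp
  also have "\<dots> = Y" using matrix_inv_left[OF assms(1)] by (simp add: matrix_mul_assoc)
  finally show ?thesis .
qed

lemma matrix_inv_diff:
  fixes A B :: "real^'n^'n"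
  assumes "invertible A" "invertible B"
  shows "matrix_inv A - matrix_inv B = matrix_inv A ** (B - A) ** matrix_inv B"
proof -
  have "matrix_inv A ** (B - A) ** matrix_inv B
      = matrix_inv A ** (B ** matrix_inv B) - (matrix_inv A ** A) ** matrix_inv B"
    by (simp add: matrix_mul_assoc matrix_mult_diff_left matrix_mult_diff_right)
  then show ?thesis using assms by (simp add: matrix_inv_left matrix_inv_right)
qed

lemma invertible_if_kernel_trivial:
  fixes A :: "real^'n^'n"
  assumes "\<And>x. A *v x = 0 \<Longrightarrow> x = 0"
  shows "invertible A"
proof -
  have "inj ((*v) A)"
    by (rule injI) (use assms in \<open>metis eq_iff_diff_eq_0 matrix_vector_mult_diff_distrib\<close>)
  then show ?thesis using matrix_left_invertible_injective invertible_left_inverse by blast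
qed

lemma invertible_if_posdef:
  fixes A :: "real^'n^'n"
  assumes "\<And>z. z \<noteq> 0 \<Longrightarrow> z \<bullet> (A *v z) > 0"
  shows "invertible A"
  by (rule invertible_if_kernel_trivial) (use assms in force)

lemma invertible_weighted_gram:
  fixes A :: "real^'m^'m" and L :: "real^'d^'m"
  assumes pd: "\<And>z. z \<noteq> 0 \<Longrightarrow> z \<bullet> (A *v z) > 0" and inj: "\<And>x. L *v x = 0 \<Longrightarrow> x = 0"
  shows "invertible (transpose L ** matrix_inv A ** L)"
proof (rule invertible_if_kernel_trivial)
  fix x assume h: "(transpose L ** matrix_inv A ** L) *v x = 0"
  have iA: "invertible A" using invertible_if_posdef[OF pd] .
  show "x = 0"
  proof (rule ccontr)
    assume "x \<noteq> 0"
    define z where "z = matrix_inv A *v (L *v x)"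
    have Az: "A *v z = L *v x"
      unfolding z_def using matrix_inv_right[OF iA] by (simp add: matrix_vector_mul_assoc matrix_mul_assoc)
    then have "z \<noteq> 0" using inj \<open>x \<noteq> 0\<close> by auto
    then have "0 < z \<bullet> (A *v z)" by (rule pd)
    also have "z \<bullet> (A *v z) = (L *v x) \<bullet> z" by (simp add: Az inner_commute)
    also have "\<dots> = x \<bullet> ((transpose L ** matrix_inv A ** L) *v x)"
      unfolding z_def
      by (simp only: inner_matrix_vector_mult[of x] matrix_vector_mul_assoc[symmetric] transpose_transpose)
    finally show False using h by simp
  qed
qed

lemma quadratic_form_sandwich_nonneg:
  fixes L :: "real^'d^'m" and P :: "real^'e^'d"
  shows "0 \<le> z \<bullet> ((L ** (P ** transpose P) ** transpose L) *v z)"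
proof -
  have "z \<bullet> ((L ** (P ** transpose P) ** transpose L) *v z)
      = (transpose P *v (transpose L *v z)) \<bullet> (transpose P *v (transpose L *v z))"
    by (simp only: matrix_vector_mul_assoc[symmetric] inner_matrix_vector_mult
        matrix_transpose_mul transpose_transpose)
  then show ?thesis by simp
qed

lemma integral_quadratic_form_nonneg:
  fixes f :: "real \<Rightarrow> real^'m^'m"
  assumes "f integrable_on X" "\<And>x. x \<in> X \<Longrightarrow> 0 \<le> z \<bullet> (f x *v z)"
  shows "0 \<le> z \<bullet> (integral X f *v z)"
proof -
  define h where "h Y = z \<bullet> (Y *v z)" for Y :: "real^'m^'m"
  have h: "bounded_linear h" unfolding h_def
    by (intro bounded_linear_compose[OF bounded_linear_inner_right]
        bounded_bilinear.bounded_linear_left[OF bounded_bilinear_matrix_vector_mult])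
  have "h (integral X f) = integral X (h \<circ> f)" "(h \<circ> f) integrable_on X"
    using integral_linear[OF assms(1) h] integrable_linear[OF assms(1) h] by simp_all
  moreover have "0 \<le> integral X (h \<circ> f)"
    using calculation(2) by (rule integral_nonneg) (simp add: h_def assms(2))
  ultimately show ?thesis unfolding h_def by simp
qed

section \<open>Calculus of matrix-valued functions\<close>

lemma matrix_inv_perturbation_bound:
  fixes A X :: "real^'n^'n"
  assumes K: "K > 0" "\<And>(a::real^'n^'n) (b::real^'n^'n). norm (a ** b) \<le> norm a * norm b * K"
    and inv: "invertible A" "invertible X"
    and small: "norm (X - A) * norm (matrix_inv A) * K * K \<le> 1/2"
  shows "norm (matrix_inv X - matrix_inv A) \<le> 2 * norm (matrix_inv A)^2 * K^2 * norm (X - A)"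
proof -
  define g where "g = norm (matrix_inv A)"
  define \<delta> where "\<delta> = norm (X - A) * g * K * K"
  have "norm (matrix_inv X - matrix_inv A) \<le> norm (matrix_inv X ** (A - X)) * g * K"
    unfolding matrix_inv_diff[OF inv(2,1)] g_def by (rule K(2))
  also have "\<dots> \<le> (norm (matrix_inv X) * norm (A - X) * K) * g * K"
    using K g_def by (intro mult_right_mono) auto
  finally have diff: "norm (matrix_inv X - matrix_inv A) \<le> norm (matrix_inv X) * \<delta>"
    by (simp add: \<delta>_def norm_minus_commute mult_ac)
  have "norm (matrix_inv X) \<le> g + norm (matrix_inv X - matrix_inv A)"
    unfolding g_def by (metis norm_triangle_sub)
  also have "\<dots> \<le> g + norm (matrix_inv X) * (1/2)"
    using diff mult_left_mono[of \<delta> "1/2" "norm (matrix_inv X)"] small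
    by (simp add: \<delta>_def g_def)
  finally have "norm (matrix_inv X) \<le> 2 * g" by simp
  with diff have "norm (matrix_inv X - matrix_inv A) \<le> 2 * g * \<delta>"
    by (smt (verit) \<delta>_def g_def K(1) mult_nonneg_nonneg mult_right_mono norm_ge_zero)
  then show ?thesis by (simp add: \<delta>_def g_def power2_eq_square mult_ac)
qed

lemma continuous_matrix_inv:
  fixes F :: "real \<Rightarrow> real^'n^'n"
  assumes inv: "\<And>x. x \<in> s \<Longrightarrow> invertible (F x)" and t: "t \<in> s"
    and F: "continuous (at t within s) F"
  shows "continuous (at t within s) (\<lambda>x. matrix_inv (F x))"
proof -
  obtain K where K: "K > 0" "\<And>(a::real^'n^'n) (b::real^'n^'n). norm (a ** b) \<le> norm a * norm b * K"
    using bounded_bilinear.pos_bounded[OF bounded_bilinear_matrix_mult] by blast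
  define g where "g = norm (matrix_inv (F t))"
  define c where "c = 2 * g^2 * K^2"
  have lim: "(F \<longlongrightarrow> F t) (at t within s)" using F continuous_within by blast
  have "1 / (2 * (g + 1) * K * K) > 0" using K by (simp add: g_def add_nonneg_pos)
  then have "\<forall>\<^sub>F x in at t within s. norm (F x - F t) < 1 / (2 * (g + 1) * K * K)"
    using lim by (auto simp: tendsto_iff dist_norm)
  moreover have "\<forall>\<^sub>F x in at t within s. x \<in> s" by (simp add: eventually_at_filter)
  ultimately have "\<forall>\<^sub>F x in at t within s.
      norm (matrix_inv (F x) - matrix_inv (F t)) \<le> c * norm (F x - F t)"
  proof eventually_elim
    case (elim x)
    have g: "g \<ge> 0" by (simp add: g_def)
    have "norm (F x - F t) * (g * K * K) \<le> 1 / (2 * (g + 1) * K * K) * (g * K * K)"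
      using elim(1) K g by (intro mult_right_mono) auto
    also have "\<dots> = g / (2 * (g + 1))" using K by simp
    also have "\<dots> \<le> 1/2" using g by (simp add: field_simps)
    finally show ?case
      using matrix_inv_perturbation_bound[OF K inv[OF t] inv[OF elim(2)]] by (simp add: c_def g_def)
  qed
  moreover have "((\<lambda>x. c * norm (F x - F t)) \<longlongrightarrow> c * 0) (at t within s)"
    using lim by (intro tendsto_intros) (simp add: LIM_zero_iff tendsto_norm_zero)
  ultimately have "((\<lambda>x. matrix_inv (F x) - matrix_inv (F t)) \<longlongrightarrow> 0) (at t within s)"
    using Lim_null_comparison by fastforce
  then show ?thesis unfolding continuous_within by (simp add: LIM_zero_iff)
qed

lemma has_vector_derivative_iff_difference_quotient:
  fixes f :: "real \<Rightarrow> 'a::real_normed_vector"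
  shows "(f has_vector_derivative D) (at x within s) \<longleftrightarrow>
     ((\<lambda>y. (1/(y-x)) *\<^sub>R (f y - f x)) \<longlongrightarrow> D) (at x within s)"
proof -
  have eq: "\<forall>\<^sub>F y in at x within s. norm ((1/norm(y-x)) *\<^sub>R (f y - (f x + (y-x) *\<^sub>R D)))
      = norm ((1/(y-x)) *\<^sub>R (f y - f x) - D)"
  proof (rule eventually_at_filter[THEN iffD2], rule always_eventually, intro allI impI)
    fix y assume "y \<noteq> x"
    then have "(1/(y-x)) *\<^sub>R ((y-x) *\<^sub>R D) = D" by simp
    then have "(1/(y-x)) *\<^sub>R (f y - f x) - D = (1/(y-x)) *\<^sub>R (f y - (f x + (y-x) *\<^sub>R D))"
      by (simp only: diff_diff_eq[symmetric] scaleR_diff_right)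
    then show "norm ((1/norm(y-x)) *\<^sub>R (f y - (f x + (y-x) *\<^sub>R D))) = norm ((1/(y-x)) *\<^sub>R (f y - f x) - D)"
      by simp
  qed
  have "(f has_vector_derivative D) (at x within s) \<longleftrightarrow>
     ((\<lambda>y. (1/norm(y-x)) *\<^sub>R (f y - (f x + (y-x) *\<^sub>R D))) \<longlongrightarrow> 0) (at x within s)"
    by (simp add: has_vector_derivative_def has_derivative_within bounded_linear_scaleR_left)
  also have "\<dots> \<longleftrightarrow> ((\<lambda>y. norm ((1/(y-x)) *\<^sub>R (f y - f x) - D)) \<longlongrightarrow> 0) (at x within s)"
    by (subst tendsto_norm_zero_iff[symmetric]) (rule tendsto_cong[OF eq])
  also have "\<dots> \<longleftrightarrow> ((\<lambda>y. (1/(y-x)) *\<^sub>R (f y - f x)) \<longlongrightarrow> D) (at x within s)"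
    by (simp add: tendsto_norm_zero_iff LIM_zero_iff)
  finally show ?thesis .
qed

lemma has_vector_derivative_matrix_inv:
  fixes F :: "real \<Rightarrow> real^'n^'n"
  assumes inv: "\<And>x. x \<in> s \<Longrightarrow> invertible (F x)" and t: "t \<in> s"
    and F: "(F has_vector_derivative F') (at t within s)"
  shows "((\<lambda>x. matrix_inv (F x)) has_vector_derivative - (matrix_inv (F t) ** F' ** matrix_inv (F t)))
    (at t within s)"
proof -
  define G where "G x = matrix_inv (F x)" for x
  have "continuous (at t within s) G"
    unfolding G_def by (rule continuous_matrix_inv[OF inv t has_vector_derivative_continuous[OF F]])
  moreover have "((\<lambda>y. (1/(y-t)) *\<^sub>R (F y - F t)) \<longlongrightarrow> F') (at t within s)"
    using F has_vector_derivative_iff_difference_quotient by blast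
  ultimately have "((\<lambda>y. - (G y ** ((1/(y-t)) *\<^sub>R (F y - F t)) ** G t)) \<longlongrightarrow> - (G t ** F' ** G t))
      (at t within s)"
    unfolding continuous_within
    by (intro tendsto_minus bounded_bilinear.tendsto[OF bounded_bilinear_matrix_mult] tendsto_const)
  moreover have "\<forall>\<^sub>F y in at t within s.
      - (G y ** ((1/(y-t)) *\<^sub>R (F y - F t)) ** G t) = (1/(y-t)) *\<^sub>R (G y - G t)"
  proof (rule eventually_at_filter[THEN iffD2], rule always_eventually, intro allI impI)
    fix y assume "y \<in> s"
    have "G y - G t = - (G y ** (F y - F t) ** G t)"
      unfolding G_def matrix_inv_diff[OF inv[OF \<open>y \<in> s\<close>] inv[OF t]]
      by (metis minus_diff_eq matrix_mult_minus_left matrix_mult_minus_right)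
    then show "- (G y ** ((1/(y-t)) *\<^sub>R (F y - F t)) ** G t) = (1/(y-t)) *\<^sub>R (G y - G t)"
      by (simp add: matrix_scalar_ac scalar_matrix_assoc)
  qed
  ultimately have "((\<lambda>y. (1/(y-t)) *\<^sub>R (G y - G t)) \<longlongrightarrow> - (G t ** F' ** G t)) (at t within s)"
    using tendsto_cong by fastforce
  then show ?thesis unfolding G_def[symmetric] using has_vector_derivative_iff_difference_quotient by blast
qed

lemma integrable_on_continuous_head:
  fixes f g :: "real \<Rightarrow> 'a::banach"
  assumes "b \<le> c" and g: "continuous_on {a..b} g" and fg: "\<And>x. x \<in> {a..b} \<Longrightarrow> f x = g x"
    and f: "f integrable_on {b..c}" and s: "s \<in> {a..b}"
  shows "f integrable_on {s..c}"
proof -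
  have "g integrable_on {s..b}"
    using g s by (intro integrable_continuous_interval continuous_on_subset[OF g]) auto
  then have "f integrable_on {s..b}" by (rule integrable_eq) (use fg s in auto)
  then show ?thesis using Henstock_Kurzweil_Integration.integrable_combine[OF _ \<open>b \<le> c\<close> _ f] s by auto
qed

lemma has_vector_derivative_integral_lower:
  fixes f g :: "real \<Rightarrow> 'a::banach"
  assumes "a \<le> b" "b \<le> c" and g: "continuous_on {a..b} g"
    and fg: "\<And>x. x \<in> {a..b} \<Longrightarrow> f x = g x" and f: "f integrable_on {b..c}" and t: "t \<in> {a..b}"
  shows "((\<lambda>s. integral {s..c} f) has_vector_derivative - g t) (at t within {a..b})"
proof -
  define k where "k = integral {a..c} f"
  have fi: "f integrable_on {a..c}"
    using integrable_on_continuous_head[OF assms(2) g fg f] assms(1) by auto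
  have eq: "integral {s..c} f = k - integral {a..s} g" if s: "s \<in> {a..b}" for s
  proof -
    have "integral {a..s} f + integral {s..c} f = k"
      unfolding k_def using s assms(2) by (intro Henstock_Kurzweil_Integration.integral_combine fi) auto
    moreover have "integral {a..s} f = integral {a..s} g" by (rule integral_cong) (use fg s in auto)
    ultimately show ?thesis by (simp add: algebra_simps)
  qed
  have "((\<lambda>s. k - integral {a..s} g) has_vector_derivative 0 - g t) (at t within {a..b})"
    by (intro has_vector_derivative_diff has_vector_derivative_const integral_has_vector_derivative g t)
  then show ?thesis
    by (intro has_vector_derivative_transform[OF t eq]) simp_all
qed

lemma integrable_linear_image_spike:
  fixes f :: "real \<Rightarrow> 'b::euclidean_space" and g :: "real \<Rightarrow> 'a::euclidean_space"
  assumes h: "bounded_linear h" and g: "g integrable_on {a..b}"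
    and fg: "\<And>x. x \<in> {a<..b} \<Longrightarrow> f x = h (g x)"
  shows "f integrable_on {a..b} \<and> integral {a..b} f = h (integral {a..b} g)"
proof -
  have eq: "f x = (h \<circ> g) x" if "x \<in> {a..b} - {a}" for x using that fg by auto
  have "f integrable_on {a..b}"
    by (rule integrable_spike[OF integrable_linear[OF g h] negligible_sing eq])
  moreover have "integral {a..b} f = integral {a..b} (h \<circ> g)"
    by (rule integral_spike[OF negligible_sing[of a]]) (use eq in simp)
  ultimately show ?thesis using integral_linear[OF g h] by simp
qed

lemma continuous_within_Icc_imp_tendsto_at_right:
  fixes f :: "real \<Rightarrow> 'a::topological_space"
  assumes "continuous (at x within {a..b}) f" "a \<le> x" "x < b"
  shows "(f \<longlongrightarrow> f x) (at_right x)"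
proof -
  have "continuous (at x within {x..b}) f"
    by (rule continuous_within_subset[OF assms(1)]) (use assms in auto)
  then show ?thesis using at_within_Icc_at_right[OF assms(3)] continuous_within by metis
qed

section \<open>Linear differential equations\<close>

lemma continuous_matrix_function_bound:
  fixes B :: "real \<Rightarrow> real^'d^'d"
  assumes "continuous_on {0..T} B"
  obtains K where "K > 0" "\<And>t x. t \<in> {0..T} \<Longrightarrow> norm (B t *v x) \<le> K * norm x"
proof -
  have "bounded (B ` {0..T})"
    using compact_imp_bounded compact_continuous_image[OF assms compact_Icc] by blast
  then obtain Kb where Kb: "Kb > 0" "\<And>t. t \<in> {0..T} \<Longrightarrow> norm (B t) \<le> Kb"
    unfolding bounded_pos by blast
  obtain Kv where Kv: "Kv > 0" "\<And>(a::real^'d^'d) (b::real^'d). norm (a *v b) \<le> norm a * norm b * Kv"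
    using bounded_bilinear.pos_bounded[OF bounded_bilinear_matrix_vector_mult] by blast
  have "norm (B t *v x) \<le> Kb * Kv * norm x" if "t \<in> {0..T}" for t x
  proof -
    have "norm (B t *v x) \<le> norm (B t) * norm x * Kv" by (rule Kv(2))
    also have "\<dots> \<le> Kb * norm x * Kv" using Kb(2)[OF that] Kv by (intro mult_right_mono) auto
    finally show ?thesis by (simp add: mult_ac)
  qed
  then show ?thesis using that Kb Kv by (meson mult_pos_pos)
qed

text \<open>Backward uniqueness for linear ODEs: the weighted energy \<open>exp (2 K t) \<bar>u t\<bar>\<^sup>2\<close> is
  nondecreasing, so a solution vanishing at some time vanishes at time 0.\<close>
lemma linear_ode_zero_imp_zero_at_0:
  fixes B :: "real \<Rightarrow> real^'d^'d"
  assumes B: "continuous_on {0..T} B"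
    and u: "\<And>t. t \<in> {0..T} \<Longrightarrow> (u has_vector_derivative (B t *v u t)) (at t within {0..T})"
    and t0: "t0 \<in> {0..T}" and "u t0 = 0"
  shows "u 0 = 0"
proof -
  obtain K where K: "K > 0" "\<And>t x. t \<in> {0..T} \<Longrightarrow> norm (B t *v x) \<le> K * norm x"
    using continuous_matrix_function_bound[OF B] by blast
  define f where "f t = exp (2*K*t) * (u t \<bullet> u t)" for t
  define f' where "f' t = exp (2*K*t) * (2*K * (u t \<bullet> u t) + 2 * (u t \<bullet> (B t *v u t)))" for t
  have df: "(f has_real_derivative f' t) (at t within {0..T})" if "t \<in> {0..T}" for t
  proof -
    have "((\<lambda>t. u t \<bullet> u t) has_real_derivative (u t \<bullet> (B t *v u t) + (B t *v u t) \<bullet> u t))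
        (at t within {0..T})"
      using bounded_bilinear.has_vector_derivative[OF bounded_bilinear_inner u[OF that] u[OF that]]
      by (simp add: has_real_derivative_iff_has_vector_derivative)
    then show ?thesis unfolding f_def f'_def
      by (auto intro!: derivative_eq_intros simp: inner_commute algebra_simps)
  qed
  have f'_nonneg: "0 \<le> f' t" if "t \<in> {0..T}" for t
  proof -
    have "\<bar>u t \<bullet> (B t *v u t)\<bar> \<le> norm (u t) * norm (B t *v u t)" by (rule Cauchy_Schwarz_ineq2)
    also have "\<dots> \<le> norm (u t) * (K * norm (u t))" by (intro mult_left_mono K(2) that) auto
    finally have "\<bar>u t \<bullet> (B t *v u t)\<bar> \<le> K * (u t \<bullet> u t)"
      by (simp add: power2_norm_eq_inner[symmetric] power2_eq_square mult_ac)
    then show ?thesis unfolding f'_def by (intro mult_nonneg_nonneg) auto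
  qed
  have "f 0 \<le> f t0"
  proof (rule DERIV_nonneg_imp_increasing_open[of 0 t0 f])
    show "0 \<le> t0" using t0 by simp
    fix x assume x: "0 < x" "x < t0"
    then have "x \<in> {0..T}" "at x within {0..T} = at x" using t0 by (auto intro!: at_within_Icc_at)
    then show "\<exists>y. (f has_real_derivative y) (at x) \<and> 0 \<le> y" using df f'_nonneg by metis
  next
    have "continuous_on {0..T} f"
      using df by (meson DERIV_continuous continuous_on_eq_continuous_within)
    then show "continuous_on {0..t0} f" by (rule continuous_on_subset) (use t0 in auto)
  qed
  then show ?thesis using \<open>u t0 = 0\<close> by (simp add: f_def) (meson inner_ge_zero antisym inner_eq_zero_iff)
qed

lemma fundamental_matrix_invertible:
  fixes \<Phi> B :: "real \<Rightarrow> real^'d^'d"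
  assumes B: "continuous_on {0..T} B"
    and \<Phi>: "\<forall>t\<in>{0..T}. (\<Phi> has_vector_derivative (B t ** \<Phi> t)) (at t within {0..T})"
    and "\<Phi> 0 = mat 1" and t0: "t0 \<in> {0..T}"
  shows "invertible (\<Phi> t0)"
proof (rule invertible_if_kernel_trivial)
  fix v assume v: "\<Phi> t0 *v v = 0"
  have "((\<lambda>t. \<Phi> t *v v) has_vector_derivative (B t *v (\<Phi> t *v v))) (at t within {0..T})"
    if "t \<in> {0..T}" for t
    using bounded_linear.has_vector_derivative[OF
        bounded_bilinear.bounded_linear_left[OF bounded_bilinear_matrix_vector_mult] bspec[OF \<Phi> that]]
    by (simp add: matrix_vector_mul_assoc)
  from linear_ode_zero_imp_zero_at_0[OF B this t0 v] show "v = 0" using \<open>\<Phi> 0 = mat 1\<close> by simp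
qed

section \<open>Block matrices\<close>

lemma sum_UNIV_Plus:
  "sum f (UNIV::('a::finite + 'b::finite) set) = sum (f \<circ> Inl) UNIV + sum (f \<circ> Inr) UNIV"
  by (simp add: UNIV_Plus_UNIV[symmetric] sum.Plus del: UNIV_Plus_UNIV)

lemma stack_vec_split: "(z::real^('a::finite + 'b::finite)) = stack_vec (\<chi> k. z $ Inl k) (\<chi> k. z $ Inr k)"
  by (simp add: stack_vec_def vec_eq_iff split: sum.split)

lemma stack_vec_eq_0_iff: "stack_vec p q = 0 \<longleftrightarrow> p = 0 \<and> q = 0"
  by (auto simp: stack_vec_def vec_eq_iff split: sum.splits)

lemma inner_stack_vec: "stack_vec p q \<bullet> stack_vec p' q' = p \<bullet> p' + (q::real^'b::finite) \<bullet> q'"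
  by (simp add: inner_vec_def sum_UNIV_Plus stack_vec_def o_def)

lemma stack_vec_add: "stack_vec p q + stack_vec p' q' = stack_vec (p + p') (q + q')"
  and stack_vec_diff: "stack_vec p q - stack_vec p' q' = stack_vec (p - p') (q - q')"
  by (simp_all add: stack_vec_def vec_eq_iff split: sum.split)

lemma block_diag_mult_stack_vec: "block_diag X Y *v stack_vec p q = stack_vec (X *v p) (Y *v q)"
  by (simp add: block_diag_def stack_vec_def matrix_vector_mult_def vec_eq_iff sum_UNIV_Plus o_def
      split: sum.split)

lemma stack_rows_mult_vec: "stack_rows A C *v x = stack_vec (A *v x) (C *v x)"
  by (simp add: stack_rows_def stack_vec_def matrix_vector_mult_def vec_eq_iff split: sum.split)

lemma transpose_stack_rows_mult_stack_vec:
  "transpose (stack_rows A C) *v stack_vec u w = transpose A *v u + transpose C *v w"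
  by (simp add: stack_rows_def stack_vec_def matrix_vector_mult_def vec_eq_iff transpose_def
      sum_UNIV_Plus o_def del: transpose_matrix_vector)

lemma matrix_eq_stack_vec:
  fixes A B :: "real^('a::finite + 'b::finite)^'m"
  assumes "\<And>p q. A *v stack_vec p q = B *v stack_vec p q"
  shows "A = B"
  using assms stack_vec_split matrix_eq by metis

lemma stack_rows_matrix_mult: "stack_rows A C ** (X::real^'n^'d) = stack_rows (A ** X) (C ** X)"
  by (simp add: matrix_eq stack_rows_mult_vec matrix_vector_mul_assoc[symmetric])

lemma block_diag_mult:
  "block_diag A C ** block_diag A' C' = block_diag (A ** A') (C ** (C'::real^'b::finite^'b))"
  by (rule matrix_eq_stack_vec) (simp add: block_diag_mult_stack_vec matrix_vector_mul_assoc[symmetric])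

lemma block_diag_mat_1: "block_diag (mat 1) (mat 1) = (mat 1 :: real^('a::finite+'b::finite)^('a+'b))"
  by (rule matrix_eq_stack_vec) (simp add: block_diag_mult_stack_vec)

lemma block_diag_add:
  "block_diag A C + block_diag A' C' = block_diag (A + A') (C + (C'::real^'b::finite^'b))"
  by (rule matrix_eq_stack_vec)
    (simp add: block_diag_mult_stack_vec matrix_vector_mult_add_rdistrib stack_vec_add)

lemma matrix_inv_block_diag:
  fixes A :: "real^'a::finite^'a" and C :: "real^'b::finite^'b"
  assumes "invertible A" "invertible C" "invertible (block_diag A C)"
  shows "matrix_inv (block_diag A C) = block_diag (matrix_inv A) (matrix_inv C)"
  by (rule matrix_inv_unique[OF assms(3)])
    (simp add: block_diag_mult matrix_inv_right assms block_diag_mat_1)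

lemma block_diag_posdef:
  fixes A :: "real^'a::finite^'a" and C :: "real^'b::finite^'b"
  assumes "sym_posdef A" "sym_posdef C" "z \<noteq> 0"
  shows "z \<bullet> (block_diag A C *v z) > 0"
proof -
  obtain p q where z: "z = stack_vec p q" using stack_vec_split by blast
  have "p \<bullet> (A *v p) \<ge> 0" "q \<bullet> (C *v q) \<ge> 0"
    "p \<noteq> 0 \<Longrightarrow> p \<bullet> (A *v p) > 0" "q \<noteq> 0 \<Longrightarrow> q \<bullet> (C *v q) > 0"
    using assms(1,2) unfolding sym_posdef_def by (metis inner_zero_left order_refl less_imp_le)+
  moreover have "p \<noteq> 0 \<or> q \<noteq> 0" using assms(3) z stack_vec_eq_0_iff by auto
  ultimately show ?thesis unfolding z
    by (auto simp: block_diag_mult_stack_vec inner_stack_vec add_pos_nonneg add_nonneg_pos)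
qed

lemma block_diag_0_left:
  fixes Y :: "real^'b::finite^'b"
  defines "E \<equiv> stack_rows (0::real^'b^'a::finite) (mat 1)"
  shows "block_diag 0 Y = E ** Y ** transpose E"
  unfolding E_def
  by (rule matrix_eq_stack_vec)
    (simp add: block_diag_mult_stack_vec matrix_vector_mul_assoc[symmetric]
      transpose_stack_rows_mult_stack_vec stack_rows_mult_vec transpose_zero del: transpose_matrix_vector)

section \<open>The estimate \<open>\<nu>\<close>\<close>

text \<open>With \<open>M = A\<inverse>\<close>, \<open>H = L\<^sup>T M L\<close> and \<open>r = L\<^sup>T M (x - \<mu>)\<close> one finds
  \<open>H' = - B\<^sup>T H + H a H - H B\<close> and \<open>r' = - B\<^sup>T r + H a r + H \<beta>\<close>; in the derivative of
  \<open>H\<inverse> r\<close> all terms except \<open>B H\<inverse> r + \<beta>\<close> cancel.\<close>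
lemma least_squares_estimate_has_vector_derivative:
  fixes L :: "real \<Rightarrow> real^'d^'m" and A :: "real \<Rightarrow> real^'m^'m" and \<mu> :: "real \<Rightarrow> real^'m"
    and B a :: "real^'d^'d" and \<beta> :: "real^'d" and x :: "real^'m"
  assumes t: "t \<in> U"
    and L: "(L has_vector_derivative - (L t ** B)) (at t within U)"
    and A: "(A has_vector_derivative - (L t ** a ** transpose (L t))) (at t within U)"
    and \<mu>: "(\<mu> has_vector_derivative - (L t *v \<beta>)) (at t within U)"
    and invA: "\<And>s. s \<in> U \<Longrightarrow> invertible (A s)"
    and invH: "\<And>s. s \<in> U \<Longrightarrow> invertible (transpose (L s) ** matrix_inv (A s) ** L s)"
  defines "\<nu> \<equiv> \<lambda>s. matrix_inv (transpose (L s) ** matrix_inv (A s) ** L s)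
      *v (transpose (L s) *v (matrix_inv (A s) *v (x - \<mu> s)))"
  shows "(\<nu> has_vector_derivative (B *v \<nu> t + \<beta>)) (at t within U)"
proof -
  define Lt where "Lt = L t"
  define M where "M = matrix_inv (A t)"
  define H where "H = transpose Lt ** M ** Lt"
  define Hi where "Hi = matrix_inv H"
  define w where "w = x - \<mu> t"
  note mult = bounded_bilinear.has_vector_derivative[OF bounded_bilinear_matrix_mult]
  note mult_vec = bounded_bilinear.has_vector_derivative[OF bounded_bilinear_matrix_vector_mult]
  have M': "((\<lambda>s. matrix_inv (A s)) has_vector_derivative - (M ** (- (Lt ** a ** transpose Lt)) ** M))
      (at t within U)"
    unfolding M_def Lt_def by (rule has_vector_derivative_matrix_inv[OF invA t A])
  have LT': "((\<lambda>s. transpose (L s)) has_vector_derivative transpose (- (Lt ** B))) (at t within U)"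
    unfolding Lt_def by (rule bounded_linear.has_vector_derivative[OF bounded_linear_transpose L])
  have H': "((\<lambda>s. transpose (L s) ** matrix_inv (A s) ** L s) has_vector_derivative
      transpose Lt ** M ** - (Lt ** B)
      + (transpose Lt ** - (M ** - (Lt ** a ** transpose Lt) ** M) + transpose (- (Lt ** B)) ** M) ** Lt)
      (at t within U)" (is "(_ has_vector_derivative ?H') _")
    using mult[OF mult[OF LT' M'] L] unfolding Lt_def M_def .
  have r': "((\<lambda>s. transpose (L s) *v (matrix_inv (A s) *v (x - \<mu> s))) has_vector_derivative
      transpose Lt *v (M *v (Lt *v \<beta>) + - (M ** - (Lt ** a ** transpose Lt) ** M) *v w)
      + transpose (- (Lt ** B)) *v (M *v w)) (at t within U)" (is "(_ has_vector_derivative ?r') _")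
    using mult_vec[OF LT' mult_vec[OF M' has_vector_derivative_diff[OF has_vector_derivative_const \<mu>]]]
    unfolding Lt_def M_def w_def diff_0 minus_minus .
  have \<nu>': "(\<nu> has_vector_derivative Hi *v ?r' + - (Hi ** ?H' ** Hi) *v (transpose Lt *v (M *v w)))
      (at t within U)"
    using mult_vec[OF has_vector_derivative_matrix_inv[OF invH t H'] r']
    unfolding \<nu>_def Hi_def H_def Lt_def M_def w_def by blast
  have "Hi ** H = mat 1" "H ** Hi = mat 1"
    using invH[OF t] by (simp_all add: Hi_def H_def M_def Lt_def matrix_inv_left matrix_inv_right)
  then have cancel: "Hi *v (transpose Lt *v (M *v (Lt *v z))) = z"
      "transpose Lt *v (M *v (Lt *v (Hi *v z))) = z" for z
    by (simp_all add: H_def matrix_vector_mul_assoc matrix_mul_assoc)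
  show ?thesis
    apply (rule has_vector_derivative_eq_rhs[OF \<nu>'])
    unfolding \<nu>_def Hi_def[symmetric] H_def[symmetric] Lt_def[symmetric] M_def[symmetric] w_def[symmetric]
    by (simp del: transpose_matrix_vector vector_transpose_matrix
        add: matrix_vector_mul_assoc[symmetric] matrix_transpose_mul transpose_minus
        matrix_vector_mult_minus_left matrix_vector_mult_minus_right matrix_vector_mult_add_rdistrib
        matrix_vector_right_distrib matrix_vector_mult_diff_distrib cancel)
qed

lemma continuous_on_diffusion: "continuous_on S \<sigma> \<Longrightarrow> continuous_on S (diffusion \<sigma>)"
  unfolding diffusion_def[abs_def]
  by (intro bounded_bilinear.continuous_on[OF bounded_bilinear_matrix_mult]
      bounded_linear.continuous_on[OF bounded_linear_transpose])

locale fundamental_matrix =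
  fixes T :: real and B :: "real \<Rightarrow> real^'d^'d" and \<Phi> :: "real \<Rightarrow> real^'d^'d"
  assumes B_continuous: "continuous_on {0..T} B"
    and \<Phi>_derivative: "\<forall>t\<in>{0..T}. (\<Phi> has_vector_derivative (B t ** \<Phi> t)) (at t within {0..T})"
    and \<Phi>_0: "\<Phi> 0 = mat 1"
begin

lemma \<Phi>_invertible: "t \<in> {0..T} \<Longrightarrow> invertible (\<Phi> t)"
  using fundamental_matrix_invertible[OF B_continuous \<Phi>_derivative \<Phi>_0] .

lemma trans_mat_self: "t \<in> {0..T} \<Longrightarrow> trans_mat \<Phi> t t = mat 1"
  unfolding trans_mat_def using \<Phi>_invertible matrix_inv_right by blast

lemma matrix_inv_\<Phi>_derivative:
  assumes t: "t \<in> {0..T}"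
  shows "((\<lambda>s. C ** matrix_inv (\<Phi> s)) has_vector_derivative - (C ** matrix_inv (\<Phi> t) ** B t))
    (at t within {0..T})"
proof -
  have "((\<lambda>s. matrix_inv (\<Phi> s)) has_vector_derivative
      - (matrix_inv (\<Phi> t) ** (B t ** \<Phi> t) ** matrix_inv (\<Phi> t))) (at t within {0..T})"
    by (rule has_vector_derivative_matrix_inv[where F = \<Phi>, OF \<Phi>_invertible t bspec[OF \<Phi>_derivative t]])
  moreover have "matrix_inv (\<Phi> t) ** (B t ** \<Phi> t) ** matrix_inv (\<Phi> t) = matrix_inv (\<Phi> t) ** B t"
    using matrix_inv_right[OF \<Phi>_invertible[OF t]] by (simp add: matrix_mul_assoc[symmetric])
  ultimately have "((\<lambda>s. matrix_inv (\<Phi> s)) has_vector_derivative - (matrix_inv (\<Phi> t) ** B t))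
      (at t within {0..T})"
    by simp
  from bounded_linear.has_vector_derivative[OF
      bounded_bilinear.bounded_linear_right[OF bounded_bilinear_matrix_mult, of C] this]
  show ?thesis by (simp add: matrix_mult_minus_right matrix_mul_assoc)
qed

lemma matrix_inv_\<Phi>_continuous: "continuous_on {0..T} (\<lambda>s. C ** matrix_inv (\<Phi> s))"
  unfolding continuous_on_eq_continuous_within
  using has_vector_derivative_continuous[OF matrix_inv_\<Phi>_derivative] by blast

end

text \<open>One piece of the filter: \<open>b = T\<close> with \<open>L_single\<close> describes \<open>(S, T]\<close>, and \<open>b = S\<close> with
  \<open>L_stack\<close> describes \<open>[0, S]\<close>; beyond \<open>b\<close> only integrability of the integrands is needed.\<close>
locale observation_window = fundamental_matrix T B \<Phi>
  for T :: real and B :: "real \<Rightarrow> real^'d^'d" and \<Phi> +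
  fixes b :: real and \<beta> :: "real \<Rightarrow> real^'d" and \<sigma> :: "real \<Rightarrow> real^'e^'d"
    and C :: "real^'d^'m" and L :: "real \<Rightarrow> real^'d^'m" and \<Upsilon> :: "real^'m^'m"
  assumes b: "0 \<le> b" "b \<le> T"
    and \<beta>_continuous: "continuous_on {0..T} \<beta>" and \<sigma>_continuous: "continuous_on {0..T} \<sigma>"
    and L_eq: "\<And>t. t \<in> {0..b} \<Longrightarrow> L t = C ** matrix_inv (\<Phi> t)"
    and gram_integrable_tail: "(\<lambda>\<tau>. L \<tau> ** diffusion \<sigma> \<tau> ** transpose (L \<tau>)) integrable_on {b..T}"
    and drift_integrable_tail: "(\<lambda>\<tau>. L \<tau> *v \<beta> \<tau>) integrable_on {b..T}"
    and \<Upsilon>_posdef: "\<And>z. z \<noteq> 0 \<Longrightarrow> z \<bullet> (\<Upsilon> *v z) > 0"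
    and L_injective: "\<And>t x. t \<in> {0..b} \<Longrightarrow> L t *v x = 0 \<Longrightarrow> x = 0"
begin

abbreviation gram :: "real \<Rightarrow> real^'m^'m" where
  "gram \<tau> \<equiv> L \<tau> ** diffusion \<sigma> \<tau> ** transpose (L \<tau>)"

abbreviation precision :: "real \<Rightarrow> real^'m^'m" where
  "precision s \<equiv> integral {s..T} gram + \<Upsilon>"

lemma L_formula_continuous: "continuous_on {0..b} (\<lambda>\<tau>. C ** matrix_inv (\<Phi> \<tau>))"
  by (rule continuous_on_subset[OF matrix_inv_\<Phi>_continuous]) (use b in auto)

lemma L_derivative:
  assumes t: "t \<in> {0..b}"
  shows "(L has_vector_derivative - (L t ** B t)) (at t within {0..b})"
proof -
  have "t \<in> {0..T}" using t b by auto
  then have "((\<lambda>s. C ** matrix_inv (\<Phi> s)) has_vector_derivative - (C ** matrix_inv (\<Phi> t) ** B t))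
      (at t within {0..b})"
    by (rule has_vector_derivative_within_subset[OF matrix_inv_\<Phi>_derivative]) (use b in auto)
  then have "((\<lambda>s. C ** matrix_inv (\<Phi> s)) has_vector_derivative - (L t ** B t)) (at t within {0..b})"
    using L_eq[OF t] by simp
  then show ?thesis by (rule has_vector_derivative_transform[OF t, rotated]) (simp add: L_eq)
qed

lemma gram_formula_continuous:
  "continuous_on {0..b}
    (\<lambda>\<tau>. (C ** matrix_inv (\<Phi> \<tau>)) ** diffusion \<sigma> \<tau> ** transpose (C ** matrix_inv (\<Phi> \<tau>)))"
  using continuous_on_diffusion[OF continuous_on_subset[OF \<sigma>_continuous]] b
  by (intro bounded_bilinear.continuous_on[OF bounded_bilinear_matrix_mult]
      bounded_linear.continuous_on[OF bounded_linear_transpose] L_formula_continuous) auto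

lemma drift_formula_continuous: "continuous_on {0..b} (\<lambda>\<tau>. (C ** matrix_inv (\<Phi> \<tau>)) *v \<beta> \<tau>)"
  using continuous_on_subset[OF \<beta>_continuous] b
  by (intro bounded_bilinear.continuous_on[OF bounded_bilinear_matrix_vector_mult] L_formula_continuous) auto

lemma gram_integrable: "s \<in> {0..b} \<Longrightarrow> gram integrable_on {s..T}"
  by (rule integrable_on_continuous_head[OF b(2) gram_formula_continuous _ gram_integrable_tail])
    (simp_all add: L_eq)

lemma drift_integrable: "s \<in> {0..b} \<Longrightarrow> (\<lambda>\<tau>. L \<tau> *v \<beta> \<tau>) integrable_on {s..T}"
  by (rule integrable_on_continuous_head[OF b(2) drift_formula_continuous _ drift_integrable_tail])
    (simp_all add: L_eq)

lemma precision_derivative: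
  assumes t: "t \<in> {0..b}"
  shows "(precision has_vector_derivative - gram t) (at t within {0..b})"
proof -
  have "((\<lambda>s. integral {s..T} gram) has_vector_derivative - gram t) (at t within {0..b})"
    using has_vector_derivative_integral_lower[OF b gram_formula_continuous _ gram_integrable_tail t]
    by (simp add: L_eq L_eq[OF t])
  then show ?thesis by (simp add: has_vector_derivative_add_const)
qed

lemma mean_derivative:
  assumes t: "t \<in> {0..b}"
  shows "(kf_mu L \<beta> T has_vector_derivative - (L t *v \<beta> t)) (at t within {0..b})"
  unfolding kf_mu_def[abs_def]
  using has_vector_derivative_integral_lower[OF b drift_formula_continuous _ drift_integrable_tail t]
  by (simp add: L_eq L_eq[OF t])

lemma precision_posdef: "s \<in> {0..b} \<Longrightarrow> z \<noteq> 0 \<Longrightarrow> z \<bullet> (precision s *v z) > 0"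
  using integral_quadratic_form_nonneg[OF gram_integrable, of s z] \<Upsilon>_posdef[of z]
  by (auto simp: quadratic_form_sandwich_nonneg diffusion_def matrix_vector_mult_add_rdistrib
      inner_add_right intro: add_nonneg_pos)

lemma precision_invertible: "s \<in> {0..b} \<Longrightarrow> invertible (precision s)"
  by (rule invertible_if_posdef) (rule precision_posdef)

lemma kf_H_invertible: "s \<in> {0..b} \<Longrightarrow> invertible (kf_H L (diffusion \<sigma>) \<Upsilon> T s)"
  unfolding kf_H_def kf_M_def by (rule invertible_weighted_gram) (use precision_posdef L_injective in auto)

lemma kf_nu_derivative:
  assumes t: "t \<in> {0..b}"
  shows "(kf_nu L \<beta> (diffusion \<sigma>) \<Upsilon> x T has_vector_derivative
      (B t *v kf_nu L \<beta> (diffusion \<sigma>) \<Upsilon> x T t + \<beta> t)) (at t within {0..b})"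
  unfolding kf_nu_def[abs_def] kf_H_def kf_M_def
  using least_squares_estimate_has_vector_derivative[OF t L_derivative[OF t] precision_derivative[OF t]
      mean_derivative[OF t] precision_invertible kf_H_invertible[unfolded kf_H_def kf_M_def]] .

lemma kf_H_continuous:
  assumes t: "t \<in> {0..b}"
  shows "continuous (at t within {0..b}) (kf_H L (diffusion \<sigma>) \<Upsilon> T)"
proof -
  have M: "continuous (at t within {0..b}) (\<lambda>s. matrix_inv (precision s))"
    by (rule continuous_matrix_inv[OF precision_invertible t
          has_vector_derivative_continuous[OF precision_derivative[OF t]]])
  have L: "continuous (at t within {0..b}) L"
    by (rule has_vector_derivative_continuous[OF L_derivative[OF t]])
  show ?thesis unfolding kf_H_def[abs_def] kf_M_def
    by (intro bounded_bilinear.continuous[OF bounded_bilinear_matrix_mult]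
        bounded_linear.continuous[OF bounded_linear_transpose] M L)
qed

lemma kf_H_mult_kf_nu:
  assumes t: "t \<in> {0..b}"
  shows "kf_H L (diffusion \<sigma>) \<Upsilon> T t *v kf_nu L \<beta> (diffusion \<sigma>) \<Upsilon> x T t
    = transpose (L t) *v (kf_M L (diffusion \<sigma>) \<Upsilon> T t *v (x - kf_mu L \<beta> T t))"
  unfolding kf_nu_def matrix_vector_mul_assoc[of "kf_H L (diffusion \<sigma>) \<Upsilon> T t"]
  by (simp add: matrix_inv_right[OF kf_H_invertible[OF t]])

end

locale two_observation_times = fundamental_matrix T B \<Phi>
  for T :: real and B :: "real \<Rightarrow> real^'d^'d" and \<Phi> +
  fixes S :: real and \<beta> :: "real \<Rightarrow> real^'d" and \<sigma> :: "real \<Rightarrow> real^'e^'d"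
    and L_S :: "real^'d^'mS" and L_T :: "real^'d^'mT"
    and \<Sigma>_S :: "real^'mS^'mS" and \<Sigma>_T :: "real^'mT^'mT"
    and v_S :: "real^'mS" and v_T :: "real^'mT"
  assumes S: "0 < S" "S < T"
    and \<beta>_continuous: "continuous_on {0..T} \<beta>" and \<sigma>_continuous: "continuous_on {0..T} \<sigma>"
    and \<Sigma>_S: "sym_posdef \<Sigma>_S" and \<Sigma>_T: "sym_posdef \<Sigma>_T"
    and L_stack_injective: "\<forall>t\<in>{0..S}. \<forall>x. L_stack L_S L_T \<Phi> S T t *v x = 0 \<longrightarrow> x = 0"
    and L_single_injective: "\<forall>t\<in>{S<..T}. \<forall>x. L_single L_T \<Phi> T t *v x = 0 \<longrightarrow> x = 0"
begin

text \<open>Injectivity of \<open>L_T = L_single L_T \<Phi> T T\<close> propagates to all of \<open>[0, T]\<close>, since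
  \<open>L_single L_T \<Phi> T t = L_T \<Phi>(T) \<Phi>(t)\<inverse>\<close> differs from it by invertible factors.\<close>
lemma L_single_injective_on_0_T:
  assumes t: "t \<in> {0..T}" and x: "L_single L_T \<Phi> T t *v x = 0"
  shows "x = 0"
proof -
  have "L_single L_T \<Phi> T T = L_T"
    using trans_mat_self[of T] S by (simp add: L_single_def)
  moreover have "T \<in> {S<..T}" using S by simp
  ultimately have L_T: "L_T *v y = 0 \<Longrightarrow> y = 0" for y
    using bspec[OF L_single_injective] by metis
  have "L_T *v (\<Phi> T *v (matrix_inv (\<Phi> t) *v x)) = 0"
    using x by (simp add: L_single_def trans_mat_def matrix_vector_mul_assoc matrix_mul_assoc)
  then have "\<Phi> T *v (matrix_inv (\<Phi> t) *v x) = 0" by (rule L_T)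
  then have "matrix_inv (\<Phi> t) *v x = 0"
    using invertible_matrix_vector_eq_0_iff[OF \<Phi>_invertible[of T]] S by simp
  then have "(\<Phi> t ** matrix_inv (\<Phi> t)) *v x = 0" by (simp add: matrix_vector_mul_assoc[symmetric])
  then show "x = 0" using matrix_inv_right[OF \<Phi>_invertible[OF t]] by simp
qed

sublocale after: observation_window T B \<Phi> T \<beta> \<sigma> "L_T ** \<Phi> T" "L_single L_T \<Phi> T" \<Sigma>_T
proof
  show "0 \<le> T" "T \<le> T" using S by auto
  show "L_single L_T \<Phi> T t = L_T ** \<Phi> T ** matrix_inv (\<Phi> t)" for t
    by (simp add: L_single_def trans_mat_def matrix_mul_assoc)
  show "z \<noteq> 0 \<Longrightarrow> z \<bullet> (\<Sigma>_T *v z) > 0" for z using \<Sigma>_T by (simp add: sym_posdef_def)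
qed (use \<beta>_continuous \<sigma>_continuous L_single_injective_on_0_T
      integrable_on_refl[where a = T, unfolded cbox_interval] in auto)

definition lower_embedding :: "real^'mT^('mS + 'mT)" where
  "lower_embedding = stack_rows 0 (mat 1)"

lemma L_stack_after:
  "t \<in> {S<..T} \<Longrightarrow> L_stack L_S L_T \<Phi> S T t = lower_embedding ** L_single L_T \<Phi> T t"
  by (simp add: L_stack_def L_single_def lower_embedding_def stack_rows_matrix_mult)

lemma L_stack_at_S: "L_stack L_S L_T \<Phi> S T S = stack_rows L_S (L_single L_T \<Phi> T S)"
  using trans_mat_self[of S] S by (simp add: L_stack_def L_single_def)

lemma gram_stack_tail:
  "(\<lambda>\<tau>. L_stack L_S L_T \<Phi> S T \<tau> ** diffusion \<sigma> \<tau> ** transpose (L_stack L_S L_T \<Phi> S T \<tau>))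
      integrable_on {S..T}
   \<and> integral {S..T}
        (\<lambda>\<tau>. L_stack L_S L_T \<Phi> S T \<tau> ** diffusion \<sigma> \<tau> ** transpose (L_stack L_S L_T \<Phi> S T \<tau>))
      = block_diag 0 (integral {S..T} after.gram)"
proof -
  have "bounded_linear (\<lambda>Y::real^'mT^'mT. lower_embedding ** Y ** transpose lower_embedding)"
    by (intro bounded_linear_compose[OF bounded_bilinear.bounded_linear_left[OF bounded_bilinear_matrix_mult]]
        bounded_bilinear.bounded_linear_right[OF bounded_bilinear_matrix_mult])
  from integrable_linear_image_spike[OF this after.gram_integrable]
  show ?thesis
    using S by (simp add: L_stack_after matrix_transpose_mul matrix_mul_assoc block_diag_0_left lower_embedding_def)
qed

lemma drift_stack_tail:
  "(\<lambda>\<tau>. L_stack L_S L_T \<Phi> S T \<tau> *v \<beta> \<tau>) integrable_on {S..T}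
   \<and> integral {S..T} (\<lambda>\<tau>. L_stack L_S L_T \<Phi> S T \<tau> *v \<beta> \<tau>)
      = stack_vec 0 (integral {S..T} (\<lambda>\<tau>. L_single L_T \<Phi> T \<tau> *v \<beta> \<tau>))"
proof -
  have "bounded_linear (\<lambda>v::real^'mT. lower_embedding *v v)"
    by (rule bounded_bilinear.bounded_linear_right[OF bounded_bilinear_matrix_vector_mult])
  from integrable_linear_image_spike[OF this after.drift_integrable[of S]]
  show ?thesis
    using S by (simp add: L_stack_after lower_embedding_def stack_rows_mult_vec matrix_vector_mul_assoc[symmetric])
qed

sublocale before: observation_window T B \<Phi> S \<beta> \<sigma> "stack_rows (L_S ** \<Phi> S) (L_T ** \<Phi> T)"
    "L_stack L_S L_T \<Phi> S T" "block_diag \<Sigma>_S \<Sigma>_T"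
proof
  show "0 \<le> S" "S \<le> T" using S by auto
  show "L_stack L_S L_T \<Phi> S T t = stack_rows (L_S ** \<Phi> S) (L_T ** \<Phi> T) ** matrix_inv (\<Phi> t)"
    if "t \<in> {0..S}" for t
    using that by (simp add: L_stack_def trans_mat_def matrix_mul_assoc stack_rows_matrix_mult)
  show "z \<noteq> 0 \<Longrightarrow> z \<bullet> (block_diag \<Sigma>_S \<Sigma>_T *v z) > 0" for z by (rule block_diag_posdef[OF \<Sigma>_S \<Sigma>_T])
qed (use \<beta>_continuous \<sigma>_continuous gram_stack_tail drift_stack_tail L_stack_injective in auto)

abbreviation nu_before :: "real \<Rightarrow> real^'d" where
  "nu_before \<equiv> kf_nu (L_stack L_S L_T \<Phi> S T) \<beta> (diffusion \<sigma>) (block_diag \<Sigma>_S \<Sigma>_T) (stack_vec v_S v_T) T"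

abbreviation nu_after :: "real \<Rightarrow> real^'d" where
  "nu_after \<equiv> kf_nu (L_single L_T \<Phi> T) \<beta> (diffusion \<sigma>) \<Sigma>_T v_T T"

definition nu :: "real \<Rightarrow> real^'d" where
  "nu t = (if t \<le> S then nu_before t else nu_after t)"

lemma nu_derivative_after:
  assumes t: "t \<in> {S<..T}"
  shows "(nu has_vector_derivative (B t *v nu t + \<beta> t)) (at t within {S<..T})"
proof -
  have eq: "nu s = nu_after s" if "s \<in> {S<..T}" for s using that by (simp add: nu_def)
  have "(nu_after has_vector_derivative (B t *v nu_after t + \<beta> t)) (at t within {S<..T})"
    by (rule has_vector_derivative_within_subset[OF after.kf_nu_derivative]) (use t S in auto)
  then show ?thesis using has_vector_derivative_transform[OF t eq] eq[OF t] by simp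
qed

lemma nu_derivative_before:
  assumes t: "t \<in> {0..S}"
  shows "(nu has_vector_derivative (B t *v nu t + \<beta> t)) (at t within {0..S})"
proof -
  have eq: "nu s = nu_before s" if "s \<in> {0..S}" for s using that by (simp add: nu_def)
  show ?thesis using has_vector_derivative_transform[OF t eq before.kf_nu_derivative[OF t]] eq[OF t] by simp
qed

lemma nu_at_T: "nu T = matrix_inv (transpose L_T ** matrix_inv \<Sigma>_T ** L_T)
    *v (transpose L_T *v (matrix_inv \<Sigma>_T *v v_T))"
  using trans_mat_self[of T] S
  by (simp add: nu_def kf_nu_def kf_H_def kf_M_def kf_mu_def L_single_def)

lemma nu_tendsto_at_right: "(nu \<longlongrightarrow> nu_after S) (at_right S)"
proof (rule Lim_transform_eventually)
  show "(nu_after \<longlongrightarrow> nu_after S) (at_right S)"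
    using continuous_within_Icc_imp_tendsto_at_right[OF
        has_vector_derivative_continuous[OF after.kf_nu_derivative[of S]]] S by simp
  have "\<forall>\<^sub>F x in at_right S. x \<in> {S<..T}"
    using S by (auto simp: eventually_at_right_field intro!: exI[of _ T])
  then show "\<forall>\<^sub>F x in at_right S. nu_after x = nu x" by eventually_elim (simp add: nu_def)
qed

lemma kf_H_after_tendsto_at_right:
  "(kf_H (L_single L_T \<Phi> T) (diffusion \<sigma>) \<Sigma>_T T \<longlongrightarrow> kf_H (L_single L_T \<Phi> T) (diffusion \<sigma>) \<Sigma>_T T S)
    (at_right S)"
  using continuous_within_Icc_imp_tendsto_at_right[OF after.kf_H_continuous[of S]] S by simp

text \<open>At \<open>S\<close> the stacked precision matrix is block diagonal, so the update splits into the
  new observation \<open>L_S\<^sup>T \<Sigma>_S\<inverse> v_S\<close> and the information \<open>H(S+) \<nu>(S+)\<close> carried over from \<open>(S, T]\<close>.\<close>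
lemma nu_at_S: "nu S = matrix_inv (kf_H (L_stack L_S L_T \<Phi> S T) (diffusion \<sigma>) (block_diag \<Sigma>_S \<Sigma>_T) T S)
    *v (transpose L_S *v (matrix_inv \<Sigma>_S *v v_S)
        + kf_H (L_single L_T \<Phi> T) (diffusion \<sigma>) \<Sigma>_T T S *v nu_after S)"
proof -
  have S_in: "S \<in> {0..T}" "S \<in> {0..S}" using S by auto
  have "invertible \<Sigma>_S" by (rule invertible_if_posdef) (use \<Sigma>_S in \<open>auto simp: sym_posdef_def\<close>)
  have A: "before.precision S = block_diag \<Sigma>_S (after.precision S)"
    using gram_stack_tail block_diag_add[of 0 "integral {S..T} after.gram" \<Sigma>_S \<Sigma>_T] by simp
  have M: "kf_M (L_stack L_S L_T \<Phi> S T) (diffusion \<sigma>) (block_diag \<Sigma>_S \<Sigma>_T) T S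
      = block_diag (matrix_inv \<Sigma>_S) (kf_M (L_single L_T \<Phi> T) (diffusion \<sigma>) \<Sigma>_T T S)"
    unfolding kf_M_def A
    by (rule matrix_inv_block_diag[OF \<open>invertible \<Sigma>_S\<close> after.precision_invertible[OF S_in(1)]])
      (use before.precision_invertible[OF S_in(2)] A in simp)
  have \<mu>: "kf_mu (L_stack L_S L_T \<Phi> S T) \<beta> T S = stack_vec 0 (kf_mu (L_single L_T \<Phi> T) \<beta> T S)"
    using drift_stack_tail by (simp add: kf_mu_def)
  show ?thesis
    using S after.kf_H_mult_kf_nu[OF S_in(1), of v_T]
    by (simp add: nu_def kf_nu_def[of "L_stack L_S L_T \<Phi> S T"] M \<mu> L_stack_at_S stack_vec_diff
        block_diag_mult_stack_vec transpose_stack_rows_mult_stack_vec del: transpose_matrix_vector)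
qed

end

theorem lemma3:
  fixes S T :: real
    and \<beta> :: "real \<Rightarrow> real^'d"
    and B :: "real \<Rightarrow> real^'d^'d"
    and \<sigma> :: "real \<Rightarrow> real^'e^'d"
    and L_S :: "real^'d^'mS" and L_T :: "real^'d^'mT"
    and \<Sigma>_S :: "real^'mS^'mS" and \<Sigma>_T :: "real^'mT^'mT"
    and v_S :: "real^'mS" and v_T :: "real^'mT"
    and \<Phi> :: "real \<Rightarrow> real^'d^'d"
  defines "\<nu> \<equiv> (\<lambda>t. if t \<le> S
                  then kf_nu (L_stack L_S L_T \<Phi> S T) \<beta> (diffusion \<sigma>) (block_diag \<Sigma>_S \<Sigma>_T) (stack_vec v_S v_T) T t
                  else kf_nu (L_single L_T \<Phi> T) \<beta> (diffusion \<sigma>) \<Sigma>_T v_T T t)"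
  assumes "0 < S" and "S < T"
    and "continuous_on {0..T} \<beta>" and "continuous_on {0..T} B" and "continuous_on {0..T} \<sigma>"
    and "\<forall>t\<in>{0..T}. (\<Phi> has_vector_derivative (B t ** \<Phi> t)) (at t within {0..T})"
    and "\<Phi> 0 = mat 1"
    and "sym_posdef \<Sigma>_S" and "sym_posdef \<Sigma>_T"
    and "\<forall>t\<in>{0..S}. invertible
           (integral {t..T} (\<lambda>\<tau>. L_stack L_S L_T \<Phi> S T \<tau> ** diffusion \<sigma> \<tau> ** transpose (L_stack L_S L_T \<Phi> S T \<tau>)) + block_diag \<Sigma>_S \<Sigma>_T)"
    and "\<forall>t\<in>{S<..T}. invertible
           (integral {t..T} (\<lambda>\<tau>. L_single L_T \<Phi> T \<tau> ** diffusion \<sigma> \<tau> ** transpose (L_single L_T \<Phi> T \<tau>)) + \<Sigma>_T)"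
    and "\<forall>t\<in>{0..S}. \<forall>x. L_stack L_S L_T \<Phi> S T t *v x = 0 \<longrightarrow> x = 0"
    and "\<forall>t\<in>{S<..T}. \<forall>x. L_single L_T \<Phi> T t *v x = 0 \<longrightarrow> x = 0"
  shows "(\<forall>t\<in>{S<..T}. (\<nu> has_vector_derivative (B t *v \<nu> t + \<beta> t)) (at t within {S<..T}))
       \<and> \<nu> T = matrix_inv (transpose L_T ** matrix_inv \<Sigma>_T ** L_T)
                 *v (transpose L_T *v (matrix_inv \<Sigma>_T *v v_T))
       \<and> (\<forall>t\<in>{0..S}. (\<nu> has_vector_derivative (B t *v \<nu> t + \<beta> t)) (at t within {0..S}))
       \<and> (\<exists>\<nu>p Hp. (\<nu> \<longlongrightarrow> \<nu>p) (at_right S)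
              \<and> (kf_H (L_single L_T \<Phi> T) (diffusion \<sigma>) \<Sigma>_T T \<longlongrightarrow> Hp) (at_right S)
              \<and> \<nu> S = matrix_inv (kf_H (L_stack L_S L_T \<Phi> S T) (diffusion \<sigma>) (block_diag \<Sigma>_S \<Sigma>_T) T S)
                        *v (transpose L_S *v (matrix_inv \<Sigma>_S *v v_S) + Hp *v \<nu>p))"
proof -
  interpret two_observation_times T B \<Phi> S \<beta> \<sigma> L_S L_T \<Sigma>_S \<Sigma>_T v_S v_T
    by unfold_locales (use assms in auto)
  have "\<nu> = nu" by (rule ext) (simp add: \<nu>_def nu_def)
  then show ?thesis
    using nu_derivative_after nu_at_T nu_derivative_before nu_tendsto_at_right
      kf_H_after_tendsto_at_right nu_at_S by blast
qed

end
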